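(* Let $\|\cdot\|$ be a norm on $\mathbb{R}^2$ with unit sphere $S=\{x\in\mathbb{R}^2:\|x\|=1\}$. The following are equivalent: (i) $\|\cdot\|$ is not a URTC-norm; (ii) there exist $c,d\in S$ with $\|c-d\|>1$ such that the segment $[c,d]=\{c+t(d-c):0\le t\le 1\}$ is contained in $S$. In particular, every strictly convex norm on $\mathbb{R}^2$ is a URTC-norm.
   Context: A norm $\|\cdot\|$ on $\mathbb{R}^2$ is called a URTC-norm if for every $a,b\in\mathbb{R}^2$ with $\|a-b\|=1$ the system $\|a-x\|=1$, $\|b-x\|=1$ is satisfied by exactly two points $x\in\mathbb{R}^2$. A norm is strictly convex if its unit sphere contains no non-degenerate line segment. *)

theory Defs
  imports "HOL-Analysis.Analysis"
begin

definition is_norm :: "(real^2 \<Rightarrow> real) \<Rightarrow> bool" where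
  "is_norm N \<longleftrightarrow>
     (\<forall>x. N x = 0 \<longleftrightarrow> x = 0) \<and>
     (\<forall>a x. N (a *\<^sub>R x) = \<bar>a\<bar> * N x) \<and>
     (\<forall>x y. N (x + y) \<le> N x + N y)"

definition unit_sphere :: "(real^2 \<Rightarrow> real) \<Rightarrow> (real^2) set" where
  "unit_sphere N = {x. N x = 1}"

definition URTC_norm :: "(real^2 \<Rightarrow> real) \<Rightarrow> bool" where
  "URTC_norm N \<longleftrightarrow>
     (\<forall>a b. N (a - b) = 1 \<longrightarrow> card {x. N (a - x) = 1 \<and> N (b - x) = 1} = 2)"

definition strictly_convex_norm :: "(real^2 \<Rightarrow> real) \<Rightarrow> bool" where
  "strictly_convex_norm N \<longleftrightarrow>
     \<not> (\<exists>c d. c \<noteq> d \<and> closed_segment c d \<subseteq> unit_sphere N)"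

end

theory Submission
  imports Defs
begin

text \<open>Put u = a - b: x solves the system iff y = a - x satisfies N y = N (y - u) = 1. No such
  y lies on the line through 0 and u; by the intermediate value theorem there is one strictly
  on each side, and y \<mapsto> u - y exchanges the sides. So a third solution gives two distinct
  ones y1, y2 on the same side. Writing y1 = l y2 + \<mu> u with 0 < l \<le> 1, the convex function
  s \<mapsto> N (l y2 + s u) is at most 1 at -1 and 1 - l and equals 1 at \<mu> and \<mu> - 1, hence it
  is 1 on an interval of length greater than 1: a long segment in the unit sphere.
  Conversely, a segment [c, d] in the sphere with N (c - d) > 1 produces infinitely many
  solutions for a = (c - d) / N (c - d) and b = 0.\<close>

lemma is_norm_scaleR: "is_norm N \<Longrightarrow> N (a *\<^sub>R x) = \<bar>a\<bar> * N x"
  by (simp add: is_norm_def)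

lemma is_norm_triangle: "is_norm N \<Longrightarrow> N (x + y) \<le> N x + N y"
  by (simp add: is_norm_def)

lemma is_norm_eq_0_iff: "is_norm N \<Longrightarrow> N x = 0 \<longleftrightarrow> x = 0"
  by (simp add: is_norm_def)

lemma is_norm_minus: "is_norm N \<Longrightarrow> N (- x) = N x"
  using is_norm_scaleR[of N "-1" x] by simp

lemma is_norm_minus_commute: "is_norm N \<Longrightarrow> N (x - y) = N (y - x)"
  using is_norm_minus[of N "x - y"] by simp

lemma is_norm_nonneg: "is_norm N \<Longrightarrow> 0 \<le> N x"
  using is_norm_triangle[of N x "- x"] is_norm_minus[of N x] is_norm_eq_0_iff[of N 0] by simp

lemma convex_on_is_norm: "is_norm N \<Longrightarrow> convex_on UNIV N"
proof (rule convex_onI)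
  fix t :: real and x y :: "real^2"
  assume "is_norm N" "0 < t" "t < 1"
  then show "N ((1 - t) *\<^sub>R x + t *\<^sub>R y) \<le> (1 - t) * N x + t * N y"
    using is_norm_triangle[of N "(1 - t) *\<^sub>R x" "t *\<^sub>R y"] by (simp add: is_norm_scaleR)
qed simp

lemma continuous_on_is_norm: "is_norm N \<Longrightarrow> continuous_on UNIV N"
  by (simp add: convex_on_continuous convex_on_is_norm)

definition cross2 :: "real^2 \<Rightarrow> real^2 \<Rightarrow> real" where
  "cross2 x y = x$1 * y$2 - x$2 * y$1"

lemma cross2_add_left [simp]: "cross2 (x + z) y = cross2 x y + cross2 z y"
  and cross2_diff_left [simp]: "cross2 (x - z) y = cross2 x y - cross2 z y"
  and cross2_scaleR_left [simp]: "cross2 (a *\<^sub>R x) y = a * cross2 x y"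
  and cross2_zero_left [simp]: "cross2 0 y = 0"
  and cross2_self [simp]: "cross2 x x = 0"
  by (simp_all add: cross2_def algebra_simps)

lemma cross2_eq_0_imp_multiple:
  assumes "cross2 x y = 0" "y \<noteq> 0"
  obtains m where "x = m *\<^sub>R y"
proof -
  have "y$1 \<noteq> 0 \<or> y$2 \<noteq> 0"
    using assms(2) by (auto simp: vec_eq_iff forall_2)
  then show ?thesis
  proof
    assume "y$1 \<noteq> 0"
    then have "x = (x$1 / y$1) *\<^sub>R y"
      using assms(1) by (auto simp: vec_eq_iff forall_2 cross2_def field_simps)
    then show ?thesis by (rule that)
  next
    assume "y$2 \<noteq> 0"
    then have "x = (x$2 / y$2) *\<^sub>R y"
      using assms(1) by (auto simp: vec_eq_iff forall_2 cross2_def field_simps)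
    then show ?thesis by (rule that)
  qed
qed

lemma convex_on_const_of_interior_max:
  fixes f :: "real \<Rightarrow> real"
  assumes f: "convex_on {a..b} f" and fa: "f a \<le> f c" and fb: "f b \<le> f c"
    and c: "a < c" "c < b" and s: "s \<in> {a..b}"
  shows "f s = f c"
proof (rule antisym)
  show "f s \<le> f c"
    using convex_on_le_max[OF f s] fa fb by simp
  show "f c \<le> f s"
  proof (cases "s \<le> c")
    case True
    have "convex_on {s..b} f"
      using s by (intro convex_on_subset[OF f]) auto
    then have "f c \<le> (f b - f s) / (b - s) * (c - s) + f s"
      using True c by (intro convex_onD_Icc') auto
    also have "\<dots> \<le> (f c - f s) / (b - s) * (c - s) + f s"
      using True c fb by (intro add_right_mono mult_right_mono divide_right_mono) auto
    finally have "(f c - f s) * (b - s) \<le> (f c - f s) * (c - s)"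
      using True c by (simp add: field_simps)
    then show ?thesis
      using True c by (smt (verit) mult_le_cancel_left)
  next
    case False
    have "convex_on {a..s} f"
      using s by (intro convex_on_subset[OF f]) auto
    then have "f c \<le> (f a - f s) / (s - a) * (s - c) + f s"
      using False c by (intro convex_onD_Icc'') auto
    also have "\<dots> \<le> (f c - f s) / (s - a) * (s - c) + f s"
      using False c fa by (intro add_right_mono mult_right_mono divide_right_mono) auto
    finally have "(f c - f s) * (s - a) \<le> (f c - f s) * (s - c)"
      using False c by (simp add: field_simps)
    then show ?thesis
      using False c by (smt (verit) mult_le_cancel_left)
  qed
qed

lemma cross2_unit_pair_neq_0:
  assumes n: "is_norm N" and u: "N u = 1" and y: "N y = 1" "N (y - u) = 1"
  shows "cross2 y u \<noteq> 0"
proof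
  assume "cross2 y u = 0"
  moreover have "u \<noteq> 0"
    using u is_norm_eq_0_iff[OF n, of 0] by auto
  ultimately obtain m where m: "y = m *\<^sub>R u"
    by (rule cross2_eq_0_imp_multiple)
  then have "y - u = (m - 1) *\<^sub>R u"
    by (simp add: algebra_simps)
  then have "\<bar>m - 1\<bar> = 1"
    using y(2) u is_norm_scaleR[OF n] by simp
  moreover have "\<bar>m\<bar> = 1"
    using y(1) m u is_norm_scaleR[OF n] by simp
  ultimately show False by arith
qed

lemma exists_unit_pair_cross2_pos:
  assumes n: "is_norm N" and u: "N u = 1"
  obtains y where "N y = 1" "N (y - u) = 1" "cross2 y u > 0"
proof -
  have u0: "u \<noteq> 0"
    using u is_norm_eq_0_iff[OF n, of 0] by auto
  define w :: "real^2" where "w = vector [u$2, - u$1]"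
  have w: "cross2 w u > 0"
    using u0 by (auto simp: w_def cross2_def vec_eq_iff forall_2 sum_power2_gt_zero_iff
        simp flip: power2_eq_square)
  define v where "v t = (1 - 2 * t) *\<^sub>R u + (t * (1 - t)) *\<^sub>R w" for t
  have cross2_v: "cross2 (v t) u = t * (1 - t) * cross2 w u" for t
    by (simp add: v_def)
  have v_pos: "N (v t) > 0" if "0 \<le> t" "t \<le> 1" for t
  proof -
    have "v t \<noteq> 0"
    proof (cases "t = 0 \<or> t = 1")
      case True
      then show ?thesis using u0 by (auto simp: v_def)
    next
      case False
      then have "cross2 (v t) u \<noteq> 0"
        using w by (simp add: cross2_v)
      then show ?thesis by auto
    qed
    then show ?thesis
      using is_norm_nonneg[OF n] is_norm_eq_0_iff[OF n] by (simp add: order_less_le)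
  qed
  \<comment> \<open>The distance to u of the radial projection of v t onto the sphere runs from 0 to 2.\<close>
  define h where "h t = N ((1 / N (v t)) *\<^sub>R v t - u)" for t
  have cont_v: "continuous_on {0..1} v"
    unfolding v_def by (intro continuous_intros)
  have cont_Nv: "continuous_on {0..1} (\<lambda>t. N (v t))"
    using continuous_on_compose2[OF continuous_on_is_norm[OF n] cont_v] by simp
  have "continuous_on {0..1} h"
    unfolding h_def
    by (intro continuous_on_compose2[OF continuous_on_is_norm[OF n]] continuous_intros
        cont_v cont_Nv) (use v_pos in force)+
  moreover have "h 0 = 0"
    using u is_norm_eq_0_iff[OF n] by (simp add: h_def v_def)
  moreover have "h 1 = 2"
  proof -
    have "(1 / N (v 1)) *\<^sub>R v 1 - u = - (2 *\<^sub>R u)"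
      using u is_norm_minus[OF n, of u] by (simp add: v_def scaleR_2)
    then show ?thesis
      using u is_norm_minus[OF n] is_norm_scaleR[OF n, of 2 u] by (simp add: h_def)
  qed
  ultimately obtain t where t: "0 \<le> t" "t \<le> 1" "h t = 1"
    using IVT'[of h 0 1 1] by auto
  moreover have "t \<noteq> 0" "t \<noteq> 1"
    using t(3) \<open>h 0 = 0\<close> \<open>h 1 = 2\<close> by auto
  ultimately have "0 < t" "t < 1"
    by auto
  define y where "y = (1 / N (v t)) *\<^sub>R v t"
  show ?thesis
  proof
    show "N y = 1"
      using v_pos[OF t(1,2)] is_norm_scaleR[OF n] by (simp add: y_def)
    show "N (y - u) = 1"
      using t by (simp add: h_def y_def)
    show "cross2 y u > 0"
      using v_pos[OF t(1,2)] \<open>0 < t\<close> \<open>t < 1\<close> w by (simp add: y_def cross2_v)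
  qed
qed

definition unit_sphere_has_long_segment :: "(real^2 \<Rightarrow> real) \<Rightarrow> bool" where
  "unit_sphere_has_long_segment N \<longleftrightarrow>
     (\<exists>c d. c \<in> unit_sphere N \<and> d \<in> unit_sphere N \<and> N (c - d) > 1 \<and>
            {c + t *\<^sub>R (d - c) | t. 0 \<le> t \<and> t \<le> 1} \<subseteq> unit_sphere N)"

lemma unit_sphere_has_long_segmentI:
  assumes n: "is_norm N" and u: "N u = 1" and mM: "m + 1 < M"
    and on_sphere: "\<And>s. m \<le> s \<Longrightarrow> s \<le> M \<Longrightarrow> N (p + s *\<^sub>R u) = 1"
  shows "unit_sphere_has_long_segment N"
  unfolding unit_sphere_has_long_segment_def
proof (intro exI conjI)
  define c where "c = p + m *\<^sub>R u"
  define d where "d = p + M *\<^sub>R u"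
  show "c \<in> unit_sphere N" "d \<in> unit_sphere N"
    using on_sphere[of m] on_sphere[of M] mM by (simp_all add: unit_sphere_def c_def d_def)
  have "c - d = (m - M) *\<^sub>R u"
    by (simp add: c_def d_def algebra_simps)
  then show "N (c - d) > 1"
    using is_norm_scaleR[OF n] u mM by simp
  show "{c + t *\<^sub>R (d - c) | t. 0 \<le> t \<and> t \<le> 1} \<subseteq> unit_sphere N"
  proof clarify
    fix t :: real
    assume t: "0 \<le> t" "t \<le> 1"
    have "0 \<le> t * (M - m)" "t * (M - m) \<le> M - m"
      using t mM by (auto intro: mult_left_le_one_le)
    then have "m \<le> m + t * (M - m)" "m + t * (M - m) \<le> M"
      by linarith+
    moreover have "c + t *\<^sub>R (d - c) = p + (m + t * (M - m)) *\<^sub>R u"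
      by (simp add: c_def d_def algebra_simps)
    ultimately show "c + t *\<^sub>R (d - c) \<in> unit_sphere N"
      using on_sphere by (simp add: unit_sphere_def)
  qed
qed

lemma unit_sphere_has_long_segment_of_same_side_le:
  assumes n: "is_norm N" and u: "N u = 1"
    and y1: "N y1 = 1" "N (y1 - u) = 1" and y2: "N y2 = 1" "N (y2 - u) = 1"
    and ne: "y1 \<noteq> y2" and same_side: "cross2 y1 u * cross2 y2 u > 0"
    and le: "\<bar>cross2 y1 u\<bar> \<le> \<bar>cross2 y2 u\<bar>"
  shows "unit_sphere_has_long_segment N"
proof -
  define l where "l = cross2 y1 u / cross2 y2 u"
  have l: "0 < l" "l \<le> 1"
    using same_side le by (auto simp: l_def zero_less_divide_iff zero_less_mult_iff abs_le_iff
        divide_le_eq_1)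
  have "cross2 (y1 - l *\<^sub>R y2) u = 0"
    using same_side by (auto simp: l_def)
  moreover have "u \<noteq> 0"
    using u is_norm_eq_0_iff[OF n, of 0] by auto
  ultimately obtain \<mu> where "y1 - l *\<^sub>R y2 = \<mu> *\<^sub>R u"
    by (rule cross2_eq_0_imp_multiple)
  then have y1_eq: "y1 = l *\<^sub>R y2 + \<mu> *\<^sub>R u"
    by (simp add: algebra_simps)
  define g where "g s = N (l *\<^sub>R y2 + s *\<^sub>R u)" for s
  have "convex_on UNIV g"
  proof (rule convex_onI)
    fix t a b :: real
    assume "0 < t" "t < 1"
    have "l *\<^sub>R y2 + ((1 - t) * a + t * b) *\<^sub>R u
        = (1 - t) *\<^sub>R (l *\<^sub>R y2 + a *\<^sub>R u) + t *\<^sub>R (l *\<^sub>R y2 + b *\<^sub>R u)"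
      by (simp add: algebra_simps)
    then show "g ((1 - t) *\<^sub>R a + t *\<^sub>R b) \<le> (1 - t) * g a + t * g b"
      using convex_onD[OF convex_on_is_norm[OF n], of t] \<open>0 < t\<close> \<open>t < 1\<close>
      by (simp add: g_def)
  qed simp
  have "g (-1) \<le> (1 - l) * N (- u) + l * N (y2 - u)"
    using convex_onD[OF convex_on_is_norm[OF n], of l "- u" "y2 - u"] l
    by (simp add: g_def algebra_simps)
  then have g_left: "g (-1) \<le> 1"
    using is_norm_minus[OF n, of u] u y2 by simp
  have "g (1 - l) \<le> (1 - l) * N u + l * N y2"
    using convex_onD[OF convex_on_is_norm[OF n], of l u y2] l
    by (simp add: g_def algebra_simps)
  then have g_right: "g (1 - l) \<le> 1"
    using u y2 by simp
  have g_\<mu>: "g \<mu> = 1" and g_\<mu>1: "g (\<mu> - 1) = 1"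
    using y1 by (simp_all add: g_def y1_eq algebra_simps)
  define m where "m = min (-1) (\<mu> - 1)"
  define M where "M = max (1 - l) \<mu>"
  have "l = 1 \<longrightarrow> \<mu> \<noteq> 0"
    using y1_eq ne by auto
  then have mM: "m + 1 < M"
    using l by (auto simp: m_def M_def)
  define s0 where "s0 = (if \<mu> < M then \<mu> else \<mu> - 1)"
  have s0: "m < s0" "s0 < M" "g s0 = 1"
    using mM g_\<mu> g_\<mu>1 by (auto simp: s0_def m_def M_def)
  have "convex_on {m..M} g"
    using \<open>convex_on UNIV g\<close> by (rule convex_on_subset) auto
  then have g_const: "g s = 1" if "m \<le> s" "s \<le> M" for s
    using convex_on_const_of_interior_max[of m M g s0 s] g_left g_right g_\<mu> g_\<mu>1 s0 that
    by (auto simp: m_def M_def)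
  show ?thesis
    using unit_sphere_has_long_segmentI[OF n u mM, of "l *\<^sub>R y2"] g_const by (simp add: g_def)
qed

lemma unit_sphere_has_long_segment_of_same_side:
  assumes n: "is_norm N" and u: "N u = 1"
    and y1: "N y1 = 1" "N (y1 - u) = 1" and y2: "N y2 = 1" "N (y2 - u) = 1"
    and ne: "y1 \<noteq> y2" and same_side: "cross2 y1 u * cross2 y2 u > 0"
  shows "unit_sphere_has_long_segment N"
proof (cases "\<bar>cross2 y1 u\<bar> \<le> \<bar>cross2 y2 u\<bar>")
  case True
  then show ?thesis
    using unit_sphere_has_long_segment_of_same_side_le[OF assms] by blast
next
  case False
  then show ?thesis
    using unit_sphere_has_long_segment_of_same_side_le[OF n u y2 y1 ne[symmetric]] same_side
    by (simp add: mult.commute)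
qed

lemma unit_sphere_has_long_segment_if_not_URTC:
  assumes n: "is_norm N" and not_URTC: "\<not> URTC_norm N"
  shows "unit_sphere_has_long_segment N"
proof -
  obtain a b where ab: "N (a - b) = 1"
    and card: "card {x. N (a - x) = 1 \<and> N (b - x) = 1} \<noteq> 2"
    using not_URTC unfolding URTC_norm_def by blast
  define X where "X = {x. N (a - x) = 1 \<and> N (b - x) = 1}"
  define u where "u = a - b"
  have u: "N u = 1"
    using ab by (simp add: u_def)
  have X_iff: "x \<in> X \<longleftrightarrow> N (a - x) = 1 \<and> N (a - x - u) = 1" for x
    by (simp add: X_def u_def)
  obtain y1 where y1: "N y1 = 1" "N (y1 - u) = 1" "cross2 y1 u > 0"
    using exists_unit_pair_cross2_pos[OF n u] .
  define y2 where "y2 = u - y1"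
  have y2: "N y2 = 1" "N (y2 - u) = 1" "cross2 y2 u < 0"
    using y1 is_norm_minus_commute[OF n, of y1 u] is_norm_minus[OF n, of y1]
    by (simp_all add: y2_def)
  have "a - y1 \<in> X" "a - y2 \<in> X" "a - y1 \<noteq> a - y2"
    using y1 y2 by (auto simp: X_iff)
  moreover have "X \<noteq> {a - y1, a - y2}"
    using card \<open>a - y1 \<noteq> a - y2\<close> by (auto simp: X_def)
  ultimately obtain x where x: "x \<in> X" "x \<noteq> a - y1" "x \<noteq> a - y2"
    by blast
  define y where "y = a - x"
  have y: "N y = 1" "N (y - u) = 1" and "y \<noteq> y1" "y \<noteq> y2"
    using x by (auto simp: X_iff y_def)
  consider "cross2 y u > 0" | "cross2 y u < 0"
    using cross2_unit_pair_neq_0[OF n u y] by linarith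
  then show ?thesis
  proof cases
    case 1
    then show ?thesis
      using unit_sphere_has_long_segment_of_same_side[OF n u y y1(1,2) \<open>y \<noteq> y1\<close>] y1(3)
      by simp
  next
    case 2
    then show ?thesis
      using unit_sphere_has_long_segment_of_same_side[OF n u y y2(1,2) \<open>y \<noteq> y2\<close>] y2(3)
      by (simp add: mult_neg_neg)
  qed
qed

lemma not_URTC_if_unit_sphere_has_long_segment:
  assumes n: "is_norm N" and "unit_sphere_has_long_segment N"
  shows "\<not> URTC_norm N"
proof
  assume URTC: "URTC_norm N"
  obtain c d where "N (c - d) > 1"
    and segment: "{c + t *\<^sub>R (d - c) | t. 0 \<le> t \<and> t \<le> 1} \<subseteq> unit_sphere N"
    using assms(2) unfolding unit_sphere_has_long_segment_def by blast
  then have on_sphere: "N (c + t *\<^sub>R (d - c)) = 1" if "0 \<le> t" "t \<le> 1" for t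
    using that unfolding unit_sphere_def by blast
  define L where "L = N (c - d)"
  have L: "L > 1"
    using \<open>N (c - d) > 1\<close> by (simp add: L_def)
  define u where "u = (1 / L) *\<^sub>R (c - d)"
  have u: "N u = 1"
    using L is_norm_scaleR[OF n] by (simp add: u_def L_def)
  define X where "X = {x. N (u - x) = 1 \<and> N (0 - x) = 1}"
  have "card X = 2"
    using URTC[unfolded URTC_norm_def, rule_format, of u 0] u unfolding X_def by simp
  \<comment> \<open>The reflections of the points of [c, d] at least 1/L beyond c are all solutions.\<close>
  define f where "f s = - (c + s *\<^sub>R (d - c))" for s
  have "f ` {1 / L .. 1} \<subseteq> X"
  proof clarify
    fix s :: real
    assume s: "s \<in> {1 / L .. 1}"
    have "0 \<le> s" "s \<le> 1" "0 \<le> s - 1 / L" "s - 1 / L \<le> 1"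
      using s L by (auto intro: order_trans[rotated])
    have "u - f s = c + (s - 1 / L) *\<^sub>R (d - c)"
      by (simp add: f_def u_def algebra_simps)
    then have "N (u - f s) = 1"
      using on_sphere[of "s - 1 / L"] \<open>0 \<le> s - 1 / L\<close> \<open>s - 1 / L \<le> 1\<close> by simp
    moreover have "N (0 - f s) = 1"
      using on_sphere[of s] \<open>0 \<le> s\<close> \<open>s \<le> 1\<close> by (simp add: f_def add.commute)
    ultimately show "f s \<in> X"
      by (simp add: X_def)
  qed
  moreover have "inj_on f {1 / L .. 1}"
  proof (rule inj_onI)
    fix s t
    assume "f s = f t"
    then have "(s - t) *\<^sub>R (d - c) = 0"
      by (simp add: f_def algebra_simps)
    moreover have "d \<noteq> c"
      using \<open>N (c - d) > 1\<close> is_norm_eq_0_iff[OF n, of 0] by auto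
    ultimately show "s = t"
      by simp
  qed
  moreover have "infinite {1 / L .. 1}"
    using L by simp
  ultimately have "infinite X"
    using finite_imageD finite_subset by blast
  with \<open>card X = 2\<close> show False
    by simp
qed

lemma not_strictly_convex_if_unit_sphere_has_long_segment:
  assumes n: "is_norm N" and "unit_sphere_has_long_segment N"
  shows "\<not> strictly_convex_norm N"
proof -
  obtain c d where "N (c - d) > 1"
    and segment: "{c + t *\<^sub>R (d - c) | t. 0 \<le> t \<and> t \<le> 1} \<subseteq> unit_sphere N"
    using assms(2) unfolding unit_sphere_has_long_segment_def by blast
  have "c \<noteq> d"
    using \<open>N (c - d) > 1\<close> is_norm_eq_0_iff[OF n, of 0] by auto
  moreover have "closed_segment c d \<subseteq> unit_sphere N"
  proof
    fix x
    assume "x \<in> closed_segment c d"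
    then obtain t where "0 \<le> t" "t \<le> 1" "x = c + t *\<^sub>R (d - c)"
      unfolding closed_segment_def by (auto simp: algebra_simps)
    then show "x \<in> unit_sphere N"
      using segment by blast
  qed
  ultimately show ?thesis
    unfolding strictly_convex_norm_def by blast
qed

theorem lemma1:
  fixes N :: "real^2 \<Rightarrow> real"
  assumes "is_norm N"
  shows "(\<not> URTC_norm N \<longleftrightarrow>
            (\<exists>c d. c \<in> unit_sphere N \<and> d \<in> unit_sphere N \<and> N (c - d) > 1 \<and>
                   {c + t *\<^sub>R (d - c) | t. 0 \<le> t \<and> t \<le> 1} \<subseteq> unit_sphere N))
         \<and> (strictly_convex_norm N \<longrightarrow> URTC_norm N)"
proof -
  have iff: "\<not> URTC_norm N \<longleftrightarrow> unit_sphere_has_long_segment N"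
    using unit_sphere_has_long_segment_if_not_URTC[OF assms]
      not_URTC_if_unit_sphere_has_long_segment[OF assms] by blast
  moreover have "strictly_convex_norm N \<longrightarrow> URTC_norm N"
    using iff not_strictly_convex_if_unit_sphere_has_long_segment[OF assms] by blast
  ultimately show ?thesis
    unfolding unit_sphere_has_long_segment_def by blast
qed

end
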